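(* Let $\mathbb{B}$ be the open unit ball in $\mathbb{R}^n$ and $\mathbb{B}_*=\mathbb{B}\setminus\{0\}$. Let $\alpha$ be a multi-index with $|\alpha| = m$, where $1 \leq m < n$. Suppose $f \in L^{\frac{n}{n-m}}(\mathbb{B})$, $g \in L^1(\mathbb{B})$, and $D^\alpha f = g$ holds in the sense of distributions on $\mathbb{B}_*$, where $D^\alpha=\partial_{x_1}^{\alpha_1}\cdots\partial_{x_n}^{\alpha_n}$. Then $D^\alpha f = g$ holds in the sense of distributions on $\mathbb{B}$. *)

theory Defs
  imports "HOL-Analysis.Analysis"
begin

definition partial :: "'n::finite \<Rightarrow> (real^'n \<Rightarrow> real) \<Rightarrow> (real^'n \<Rightarrow> real)" where
  "partial i \<phi> = (\<lambda>x. deriv (\<lambda>t. \<phi> (x + t *\<^sub>R axis i 1)) 0)"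

fun partials :: "'n::finite list \<Rightarrow> (real^'n \<Rightarrow> real) \<Rightarrow> (real^'n \<Rightarrow> real)" where
  "partials [] \<phi> = \<phi>"
| "partials (i # is) \<phi> = partial i (partials is \<phi>)"

definition smooth :: "(real^'n::finite \<Rightarrow> real) \<Rightarrow> bool" where
  "smooth \<phi> \<longleftrightarrow> (\<forall>is. continuous_on UNIV (partials is \<phi>) \<and>
      (\<forall>i x. (\<lambda>t. partials is \<phi> (x + t *\<^sub>R axis i 1)) differentiable (at 0)))"

definition test_function :: "(real^'n::finite) set \<Rightarrow> (real^'n \<Rightarrow> real) \<Rightarrow> bool" where
  "test_function U \<phi> \<longleftrightarrow> smooth \<phi> \<and> compact (closure {x. \<phi> x \<noteq> 0})
      \<and> closure {x. \<phi> x \<noteq> 0} \<subseteq> U"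

definition mi_order :: "('n::finite \<Rightarrow> nat) \<Rightarrow> nat" where
  "mi_order \<alpha> = (\<Sum>i\<in>UNIV. \<alpha> i)"

text \<open>D^alpha: differentiate alpha i times in direction i (for smooth functions the order
  of differentiation is irrelevant; we pick some list with the right multiplicities).\<close>
definition Dalpha :: "('n::finite \<Rightarrow> nat) \<Rightarrow> (real^'n \<Rightarrow> real) \<Rightarrow> (real^'n \<Rightarrow> real)" where
  "Dalpha \<alpha> \<phi> = partials (SOME is. \<forall>i. count_list is i = \<alpha> i) \<phi>"

definition distrib_deriv_eq :: "('n::finite \<Rightarrow> nat) \<Rightarrow> (real^'n \<Rightarrow> real) \<Rightarrow> (real^'n \<Rightarrow> real)
    \<Rightarrow> (real^'n) set \<Rightarrow> bool" where
  "distrib_deriv_eq \<alpha> f g U \<longleftrightarrow> (\<forall>\<phi>. test_function U \<phi> \<longrightarrow>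
      (LINT x|lebesgue_on U. f x * Dalpha \<alpha> \<phi> x)
        = (-1) ^ mi_order \<alpha> * (LINT x|lebesgue_on U. g x * \<phi> x))"

definition in_Lp :: "real \<Rightarrow> (real^'n::finite) set \<Rightarrow> (real^'n \<Rightarrow> real) \<Rightarrow> bool" where
  "in_Lp p U f \<longleftrightarrow> f \<in> borel_measurable (lebesgue_on U)
      \<and> integrable (lebesgue_on U) (\<lambda>x. \<bar>f x\<bar> powr p)"

end

theory Submission
  imports Defs "HOL-Computational_Algebra.Polynomial"
begin

text \<open>Let \<open>\<phi>\<close> be a test function on the unit ball and \<open>\<psi>\<^sub>\<epsilon>(x) = \<psi>(x/\<epsilon>)\<close> a smooth cutoff
  that is \<open>1\<close> on \<open>B\<^sub>\<epsilon>\<close> and vanishes outside \<open>B\<^sub>2\<^sub>\<epsilon>\<close>. Then \<open>\<phi>(1 - \<psi>\<^sub>\<epsilon>)\<close> is a test function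
  on the punctured ball, so the defect \<open>\<integral> f D\<^sup>\<alpha>\<phi> - (-1)\<^sup>m \<integral> g \<phi>\<close> equals that of \<open>\<phi>\<psi>\<^sub>\<epsilon>\<close>.
  Since the \<open>m\<close>-th derivatives of \<open>\<phi>\<psi>\<^sub>\<epsilon>\<close> are \<open>O(\<epsilon>\<^sup>-\<^sup>m)\<close>, the defect is at most
  \<open>C (r\<^sup>-\<^sup>m \<integral>\<^bsub>B\<^sub>r\<^esub> |f| + \<integral>\<^bsub>B\<^sub>r\<^esub> |g|)\<close> with \<open>r = 3\<epsilon>\<close>. For \<open>p = n/(n-m)\<close>, splitting \<open>|f|\<close> at
  the level \<open>t r\<^sup>m\<^sup>-\<^sup>n\<close> gives \<open>\<integral>\<^bsub>B\<^sub>r\<^esub> |f| \<le> r\<^sup>m (t |B\<^sub>1| + t\<^sup>1\<^sup>-\<^sup>p \<integral>\<^bsub>B\<^sub>r\<^esub> |f|\<^sup>p)\<close>; letting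
  \<open>r \<rightarrow> 0\<close> and then \<open>t \<rightarrow> 0\<close> the defect vanishes.\<close>

section \<open>Smooth functions of one real variable\<close>

definition deriv_seq_on :: "real set \<Rightarrow> (nat \<Rightarrow> real \<Rightarrow> real) \<Rightarrow> bool" where
  "deriv_seq_on I d \<longleftrightarrow> (\<forall>k. \<forall>t\<in>I. (d k has_real_derivative d (Suc k) t) (at t))"

lemma deriv_seq_on_Suc: "deriv_seq_on I d \<Longrightarrow> deriv_seq_on I (\<lambda>k. d (Suc k))"
  by (simp add: deriv_seq_on_def)

lemma poly_inverse_exp_tendsto_0:
  "((\<lambda>h::real. poly Q (1/h) * exp (-(1/h))) \<longlongrightarrow> 0) (at_right 0)"
proof -
  have "((\<lambda>u::real. \<Sum>i\<le>degree Q. coeff Q i * (u ^ i / exp u)) \<longlongrightarrow> (\<Sum>i\<le>degree Q. coeff Q i * 0)) at_top"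
    by (intro tendsto_intros tendsto_power_div_exp_0)
  moreover have "(\<lambda>u::real. \<Sum>i\<le>degree Q. coeff Q i * (u ^ i / exp u)) = (\<lambda>u. poly Q u * exp (-u))"
    by (auto simp: poly_altdef sum_distrib_right exp_minus divide_inverse mult.assoc)
  ultimately have "((\<lambda>u::real. poly Q u * exp (-u)) \<longlongrightarrow> 0) at_top"
    by simp
  moreover have "filterlim (\<lambda>h::real. 1/h) at_top (at_right 0)"
    using filterlim_inverse_at_top_right by (simp add: inverse_eq_divide)
  ultimately show ?thesis
    by (rule filterlim_compose)
qed

text \<open>On \<open>t > 0\<close> the \<open>k\<close>-th derivative of \<open>exp (-1/t)\<close> is \<open>P\<^sub>k(1/t) exp (-1/t)\<close>,
  and differentiating gives \<open>P\<^sub>k\<^sub>+\<^sub>1(s) = s\<^sup>2 (P\<^sub>k(s) - P\<^sub>k'(s))\<close>.\<close>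

primrec inv_exp_poly :: "nat \<Rightarrow> real poly" where
  "inv_exp_poly 0 = 1"
| "inv_exp_poly (Suc k) = [:0,0,1:] * (inv_exp_poly k - pderiv (inv_exp_poly k))"

definition inv_exp_derivs :: "nat \<Rightarrow> real \<Rightarrow> real" where
  "inv_exp_derivs k t = (if t > 0 then poly (inv_exp_poly k) (1/t) * exp (-(1/t)) else 0)"

lemma inv_exp_derivs_0: "inv_exp_derivs 0 t = (if t > 0 then exp (-(1/t)) else 0)"
  by (simp add: inv_exp_derivs_def)

lemma inv_exp_derivs_has_derivative_pos:
  assumes "t > 0"
  shows "((\<lambda>t. poly (inv_exp_poly k) (1/t) * exp (-(1/t))) has_real_derivative inv_exp_derivs (Suc k) t) (at t)"
proof -
  let ?P = "inv_exp_poly k"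
  have inv: "((\<lambda>t. 1/t) has_real_derivative -(1/t^2)) (at t)"
    using assms by (auto intro!: derivative_eq_intros simp: power2_eq_square)
  have "((\<lambda>t. poly ?P (1/t) * exp (-(1/t))) has_real_derivative
      (poly (pderiv ?P) (1/t) * (-(1/t^2))) * exp (-(1/t)) + (exp (-(1/t)) * (-(-(1/t^2)))) * poly ?P (1/t)) (at t)"
    by (intro DERIV_mult DERIV_chain2[OF poly_DERIV inv] DERIV_chain2[OF DERIV_exp] DERIV_minus inv)
  moreover have "(poly (pderiv ?P) (1/t) * (-(1/t^2))) * exp (-(1/t)) + (exp (-(1/t)) * (-(-(1/t^2)))) * poly ?P (1/t)
      = inv_exp_derivs (Suc k) t"
    using assms by (simp add: inv_exp_derivs_def algebra_simps power2_eq_square)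
  ultimately show ?thesis
    by simp
qed

lemma inv_exp_derivs_has_derivative: "(inv_exp_derivs k has_real_derivative inv_exp_derivs (Suc k) t) (at t)"
proof (cases t "0::real" rule: linorder_cases)
  case less
  have "eventually (\<lambda>x. x \<in> {..<0}) (nhds t)"
    using less by (intro eventually_nhds_in_open) auto
  then have "eventually (\<lambda>x. inv_exp_derivs k x = 0) (nhds t)"
    by eventually_elim (auto simp: inv_exp_derivs_def)
  then have "(inv_exp_derivs k has_real_derivative inv_exp_derivs (Suc k) t) (at t) \<longleftrightarrow>
      ((\<lambda>t. 0) has_real_derivative 0) (at t)"
    using less by (intro DERIV_cong_ev) (auto simp: inv_exp_derivs_def)
  then show ?thesis
    by simp
next
  case equal
  have "((\<lambda>y. (inv_exp_derivs k y - inv_exp_derivs k 0) / (y - 0)) \<longlongrightarrow> 0) (at 0)"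
    unfolding filterlim_at_split
  proof
    show "((\<lambda>y. (inv_exp_derivs k y - inv_exp_derivs k 0) / (y - 0)) \<longlongrightarrow> 0) (at_left 0)"
      by (rule tendsto_eventually) (auto simp: eventually_at_filter inv_exp_derivs_def)
    have "eventually (\<lambda>y. poly ([:0,1:] * inv_exp_poly k) (1/y) * exp (-(1/y))
        = (inv_exp_derivs k y - inv_exp_derivs k 0) / (y - 0)) (at_right 0)"
      by (auto simp: eventually_at_filter inv_exp_derivs_def)
    with poly_inverse_exp_tendsto_0
    show "((\<lambda>y. (inv_exp_derivs k y - inv_exp_derivs k 0) / (y - 0)) \<longlongrightarrow> 0) (at_right 0)"
      by (rule Lim_transform_eventually)
  qed
  then show ?thesis
    using equal by (simp add: has_field_derivative_iff inv_exp_derivs_def)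
next
  case greater
  have "eventually (\<lambda>x. x \<in> {0<..}) (nhds t)"
    using greater by (intro eventually_nhds_in_open) auto
  then have "(inv_exp_derivs k has_real_derivative inv_exp_derivs (Suc k) t) (at t) \<longleftrightarrow>
      ((\<lambda>t. poly (inv_exp_poly k) (1/t) * exp (-(1/t))) has_real_derivative inv_exp_derivs (Suc k) t) (at t)"
    by (intro DERIV_cong_ev) (auto simp: inv_exp_derivs_def elim!: eventually_mono)
  then show ?thesis
    using inv_exp_derivs_has_derivative_pos[OF greater] by simp
qed

lemma deriv_seq_inv_exp: "deriv_seq_on UNIV inv_exp_derivs"
  by (simp add: deriv_seq_on_def inv_exp_derivs_has_derivative)

definition inverse_derivs :: "nat \<Rightarrow> real \<Rightarrow> real" where
  "inverse_derivs k t = (-1)^k * fact k * inverse t ^ Suc k"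

lemma inverse_derivs_0: "inverse_derivs 0 t = inverse t"
  by (simp add: inverse_derivs_def)

lemma deriv_seq_inverse: "deriv_seq_on {0<..} inverse_derivs"
  unfolding deriv_seq_on_def
proof (intro allI ballI)
  fix k and t :: real
  assume "t \<in> {0<..}"
  then have "((\<lambda>t. inverse t ^ Suc k) has_real_derivative
      of_nat (Suc k) * inverse t ^ k * (- (inverse t ^ 2))) (at t)"
    using DERIV_power[OF DERIV_inverse[of t], of "Suc k"] by (simp add: power2_eq_square mult_ac)
  then have "((\<lambda>t. (-1)^k * fact k * inverse t ^ Suc k) has_real_derivative
      (-1)^k * fact k * (of_nat (Suc k) * inverse t ^ k * (- (inverse t ^ 2)))) (at t)"
    by (rule DERIV_cmult)
  moreover have "(-1)^k * fact k * (of_nat (Suc k) * inverse t ^ k * (- (inverse t ^ 2))) = inverse_derivs (Suc k) t"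
    by (simp add: inverse_derivs_def power2_eq_square)
  moreover have "inverse_derivs k = (\<lambda>t. (-1)^k * fact k * inverse t ^ Suc k)"
    by (simp add: inverse_derivs_def[abs_def])
  ultimately show "(inverse_derivs k has_real_derivative inverse_derivs (Suc k) t) (at t)"
    by simp
qed

section \<open>Calculus of smooth functions on \<open>\<real>\<^sup>n\<close>\<close>

definition axis_differentiable :: "(real^'n::finite \<Rightarrow> real) \<Rightarrow> bool" where
  "axis_differentiable u \<longleftrightarrow> (\<forall>i x. (\<lambda>t. u (x + t *\<^sub>R axis i 1)) differentiable (at 0))"

lemma smooth_iff_axis_differentiable:
  "smooth u \<longleftrightarrow> (\<forall>is. continuous_on UNIV (partials is u) \<and> axis_differentiable (partials is u))"
  by (simp add: smooth_def axis_differentiable_def)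

lemma smooth_imp_axis_differentiable: "smooth u \<Longrightarrow> axis_differentiable u"
  by (auto simp: smooth_iff_axis_differentiable dest: spec[of _ "[]"])

lemma smooth_imp_continuous_partials: "smooth u \<Longrightarrow> continuous_on UNIV (partials is u)"
  by (simp add: smooth_iff_axis_differentiable)

lemma partial_has_real_derivative:
  assumes "axis_differentiable u"
  shows "((\<lambda>t. u (x + t *\<^sub>R axis i 1)) has_real_derivative partial i u x) (at 0)"
  using assms unfolding axis_differentiable_def partial_def
  by (simp add: DERIV_deriv_iff_real_differentiable)

lemma axis_differentiableI:
  assumes "\<And>i x. ((\<lambda>t. u (x + t *\<^sub>R axis i 1)) has_real_derivative D i x) (at 0)"
  shows "axis_differentiable u"
  unfolding axis_differentiable_def using assms real_differentiable_def by blast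

lemma partial_eqI:
  assumes "((\<lambda>t. u (x + t *\<^sub>R axis i 1)) has_real_derivative D) (at 0)"
  shows "partial i u x = D"
  using assms unfolding partial_def by (rule DERIV_imp_deriv)

lemma partials_append: "partials (is @ js) u = partials is (partials js u)"
  by (induction "is") auto

lemma partial_lincomb_has_real_derivative:
  assumes "axis_differentiable u" "axis_differentiable v"
  shows "((\<lambda>t. a * u (x + t *\<^sub>R axis i 1) + b * v (x + t *\<^sub>R axis i 1)) has_real_derivative
          a * partial i u x + b * partial i v x) (at 0)"
  by (intro DERIV_add DERIV_cmult partial_has_real_derivative assms)

lemma axis_differentiable_lincomb:
  "axis_differentiable u \<Longrightarrow> axis_differentiable v \<Longrightarrow> axis_differentiable (\<lambda>x. a * u x + b * v x)"
  by (rule axis_differentiableI, rule partial_lincomb_has_real_derivative)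

lemma axis_differentiable_add:
  "axis_differentiable u \<Longrightarrow> axis_differentiable v \<Longrightarrow> axis_differentiable (\<lambda>x. u x + v x)"
  using axis_differentiable_lincomb[of u v 1 1] by simp

lemma partial_lincomb: "axis_differentiable u \<Longrightarrow> axis_differentiable v \<Longrightarrow>
   partial i (\<lambda>x. a * u x + b * v x) = (\<lambda>x. a * partial i u x + b * partial i v x)"
  by (rule ext, rule partial_eqI, rule partial_lincomb_has_real_derivative)

lemma partial_mult_has_real_derivative:
  assumes "axis_differentiable u" "axis_differentiable v"
  shows "((\<lambda>t. u (x + t *\<^sub>R axis i 1) * v (x + t *\<^sub>R axis i 1)) has_real_derivative
          partial i u x * v x + u x * partial i v x) (at 0)"
  using DERIV_mult[OF partial_has_real_derivative[OF assms(1)] partial_has_real_derivative[OF assms(2)], of x i x i]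
  by (simp add: algebra_simps)

lemma axis_differentiable_mult:
  "axis_differentiable u \<Longrightarrow> axis_differentiable v \<Longrightarrow> axis_differentiable (\<lambda>x. u x * v x)"
  by (rule axis_differentiableI, rule partial_mult_has_real_derivative)

lemma partial_mult: "axis_differentiable u \<Longrightarrow> axis_differentiable v \<Longrightarrow>
   partial i (\<lambda>x. u x * v x) = (\<lambda>x. partial i u x * v x + u x * partial i v x)"
  by (rule ext, rule partial_eqI, rule partial_mult_has_real_derivative)

lemma partial_const: "partial i (\<lambda>x. c) = (\<lambda>x. 0)"
  by (rule ext, rule partial_eqI) simp

lemma partials_const: "partials is (\<lambda>x. c) = (\<lambda>x. if is = [] then c else 0)"
  by (induction "is") (auto simp: partial_const)

lemma axis_differentiable_const: "axis_differentiable (\<lambda>x. c)"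
  by (rule axis_differentiableI[of _ "\<lambda>i x. 0"]) simp

lemma partials_lincomb:
  assumes "\<forall>js. length js < length is \<longrightarrow> axis_differentiable (partials js u) \<and> axis_differentiable (partials js v)"
  shows "partials is (\<lambda>x. a * u x + b * v x) = (\<lambda>x. a * partials is u x + b * partials is v x)"
  using assms
proof (induction "is")
  case (Cons i "is")
  then show ?case
    by (simp add: partial_lincomb)
qed simp

lemma partials_add:
  assumes "\<forall>js. length js < length is \<longrightarrow> axis_differentiable (partials js u) \<and> axis_differentiable (partials js v)"
  shows "partials is (\<lambda>x. u x + v x) = (\<lambda>x. partials is u x + partials is v x)"
  using partials_lincomb[OF assms, of 1 1] by simp

lemma smooth_lincomb:
  assumes "smooth u" "smooth v"
  shows "smooth (\<lambda>x. a * u x + b * v x)"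
  unfolding smooth_iff_axis_differentiable
proof
  fix "is" :: "'a list"
  have "partials is (\<lambda>x. a * u x + b * v x) = (\<lambda>x. a * partials is u x + b * partials is v x)"
    using assms by (intro partials_lincomb) (auto simp: smooth_iff_axis_differentiable)
  with assms show "continuous_on UNIV (partials is (\<lambda>x. a * u x + b * v x))
      \<and> axis_differentiable (partials is (\<lambda>x. a * u x + b * v x))"
    by (auto simp: smooth_iff_axis_differentiable intro!: continuous_intros axis_differentiable_lincomb)
qed

lemma smooth_add: "smooth u \<Longrightarrow> smooth v \<Longrightarrow> smooth (\<lambda>x. u x + v x)"
  using smooth_lincomb[of u v 1 1] by simp

lemma smooth_diff: "smooth u \<Longrightarrow> smooth v \<Longrightarrow> smooth (\<lambda>x. u x - v x)"
  using smooth_lincomb[of u v 1 "-1"] by simp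

lemma smooth_const: "smooth (\<lambda>x. c)"
  unfolding smooth_iff_axis_differentiable partials_const by (auto simp: axis_differentiable_const)

lemma smooth_partial: "smooth u \<Longrightarrow> smooth (partial i u)"
  unfolding smooth_iff_axis_differentiable by (metis partials.simps partials_append)

lemma smooth_partials_add:
  assumes "smooth u" "smooth v"
  shows "partials is (\<lambda>x. u x + v x) = (\<lambda>x. partials is u x + partials is v x)"
  using assms by (intro partials_add) (auto simp: smooth_iff_axis_differentiable)

lemma smooth_of_partial_decomposition:
  assumes "P w"
    and base: "\<And>w. P w \<Longrightarrow> continuous_on UNIV w \<and> axis_differentiable w"
    and step: "\<And>w i. P w \<Longrightarrow> \<exists>a b. P a \<and> P b \<and> partial i w = (\<lambda>x. a x + b x)"
  shows "smooth w"
proof -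
  have "\<forall>w. P w \<longrightarrow> continuous_on UNIV (partials is w) \<and> axis_differentiable (partials is w)" for "is"
  proof (induction "length is" arbitrary: "is" rule: less_induct)
    case less
    show ?case
    proof (cases "is" rule: rev_cases)
      case Nil
      then show ?thesis
        using base by simp
    next
      case (snoc js i)
      show ?thesis
      proof (intro allI impI)
        fix w
        assume "P w"
        then obtain a b where ab: "P a" "P b" "partial i w = (\<lambda>x. a x + b x)"
          using step by blast
        have IH: "continuous_on UNIV (partials ks v) \<and> axis_differentiable (partials ks v)"
          if "length ks \<le> length js" "P v" for ks v
          using less snoc that by simp
        have "partials is w = (\<lambda>x. partials js a x + partials js b x)"
          unfolding snoc partials_append using ab(3) by simp (rule partials_add, use IH ab in simp)
        then show "continuous_on UNIV (partials is w) \<and> axis_differentiable (partials is w)"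
          using IH[OF order_refl ab(1)] IH[OF order_refl ab(2)]
          by (auto intro!: continuous_intros axis_differentiable_add)
      qed
    qed
  qed
  then show ?thesis
    using assms(1) unfolding smooth_iff_axis_differentiable by blast
qed

lemma smooth_mult:
  assumes "smooth u" "smooth v"
  shows "smooth (\<lambda>x. u x * v x)"
proof -
  define P where "P w \<longleftrightarrow> (\<exists>u v. smooth u \<and> smooth v \<and> w = (\<lambda>x. u x * v x))" for w :: "real^'a \<Rightarrow> real"
  show ?thesis
  proof (rule smooth_of_partial_decomposition[of P])
    show "P (\<lambda>x. u x * v x)"
      unfolding P_def using assms by blast
  next
    fix w
    assume "P w"
    then obtain u v where uv: "smooth u" "smooth v" "w = (\<lambda>x. u x * v x)"
      unfolding P_def by blast
    then show "continuous_on UNIV w \<and> axis_differentiable w"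
      using smooth_imp_continuous_partials[of _ "[]"] smooth_imp_axis_differentiable
      by (auto intro!: continuous_intros axis_differentiable_mult)
    fix i
    have "partial i w = (\<lambda>x. partial i u x * v x + u x * partial i v x)"
      using uv by (simp add: partial_mult smooth_imp_axis_differentiable)
    then show "\<exists>a b. P a \<and> P b \<and> partial i w = (\<lambda>x. a x + b x)"
      unfolding P_def using uv smooth_partial by blast
  qed
qed

lemma deriv_seq_comp_has_real_derivative:
  assumes "deriv_seq_on I d" "\<And>x. q x \<in> I" "axis_differentiable q"
  shows "((\<lambda>t. d k (q (x + t *\<^sub>R axis i 1))) has_real_derivative d (Suc k) (q x) * partial i q x) (at 0)"
proof -
  have "(d k has_real_derivative d (Suc k) (q x)) (at ((\<lambda>t. q (x + t *\<^sub>R axis i 1)) 0))"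
    using assms(1,2) by (simp add: deriv_seq_on_def)
  from DERIV_chain2[OF this partial_has_real_derivative[OF assms(3)]] show ?thesis
    by simp
qed

lemma axis_differentiable_deriv_seq_comp:
  "deriv_seq_on I d \<Longrightarrow> (\<And>x. q x \<in> I) \<Longrightarrow> axis_differentiable q \<Longrightarrow> axis_differentiable (\<lambda>x. d k (q x))"
  by (rule axis_differentiableI, rule deriv_seq_comp_has_real_derivative)

lemma partial_deriv_seq_comp:
  "deriv_seq_on I d \<Longrightarrow> (\<And>x. q x \<in> I) \<Longrightarrow> axis_differentiable q \<Longrightarrow>
    partial i (\<lambda>x. d k (q x)) = (\<lambda>x. d (Suc k) (q x) * partial i q x)"
  by (rule ext, rule partial_eqI, rule deriv_seq_comp_has_real_derivative)

lemma continuous_on_deriv_seq_comp: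
  assumes "deriv_seq_on I d" "\<And>x. q x \<in> I" "continuous_on UNIV q"
  shows "continuous_on UNIV (\<lambda>x. d k (q x))"
proof -
  have "continuous_on I (d k)"
    using assms(1) by (auto simp: deriv_seq_on_def intro!: continuous_at_imp_continuous_on DERIV_isCont)
  then show ?thesis
    using assms(2,3) by (intro continuous_on_compose2[of I "d k" UNIV q]) auto
qed

lemma smooth_deriv_seq_comp_mult:
  assumes I: "\<And>x. q x \<in> I" and q: "smooth q" and "deriv_seq_on I d" "smooth p"
  shows "smooth (\<lambda>x. d 0 (q x) * p x)"
proof -
  define P where "P w \<longleftrightarrow> (\<exists>d p. deriv_seq_on I d \<and> smooth p \<and> w = (\<lambda>x. d 0 (q x) * p x))" for w
  have aq: "axis_differentiable q" and cq: "continuous_on UNIV q"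
    using q smooth_imp_continuous_partials[of q "[]"] by (auto simp: smooth_imp_axis_differentiable)
  show ?thesis
  proof (rule smooth_of_partial_decomposition[of P])
    show "P (\<lambda>x. d 0 (q x) * p x)"
      unfolding P_def using assms(3,4) by blast
  next
    fix w
    assume "P w"
    then obtain d p where dp: "deriv_seq_on I d" "smooth p" "w = (\<lambda>x. d 0 (q x) * p x)"
      unfolding P_def by blast
    then show "continuous_on UNIV w \<and> axis_differentiable w"
      using smooth_imp_continuous_partials[of p "[]"] smooth_imp_axis_differentiable[of p]
      by (auto intro!: continuous_intros axis_differentiable_mult continuous_on_deriv_seq_comp[OF _ I cq]
          axis_differentiable_deriv_seq_comp[OF _ I aq])
    fix i
    have "P (\<lambda>x. d (Suc 0) (q x) * (partial i q x * p x))"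
      unfolding P_def using deriv_seq_on_Suc[OF dp(1)] smooth_mult[OF smooth_partial[OF q] dp(2)]
      by (intro exI[of _ "\<lambda>k. d (Suc k)"] exI[of _ "\<lambda>x. partial i q x * p x"]) simp
    moreover have "P (\<lambda>x. d 0 (q x) * partial i p x)"
      unfolding P_def using dp(1) smooth_partial[OF dp(2)] by blast
    moreover have "partial i w = (\<lambda>x. d (Suc 0) (q x) * (partial i q x * p x) + d 0 (q x) * partial i p x)"
      using partial_mult[OF axis_differentiable_deriv_seq_comp[OF dp(1) I aq] smooth_imp_axis_differentiable[OF dp(2)]]
        partial_deriv_seq_comp[OF dp(1) I aq] dp(3) by (simp add: algebra_simps)
    ultimately show "\<exists>a b. P a \<and> P b \<and> partial i w = (\<lambda>x. a x + b x)"
      by blast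
  qed
qed

lemma smooth_deriv_seq_comp:
  assumes "deriv_seq_on I d" "\<And>x. q x \<in> I" "smooth q"
  shows "smooth (\<lambda>x. d 0 (q x))"
  using smooth_deriv_seq_comp_mult[OF assms(2,3,1) smooth_const[of 1]] by simp

lemma smooth_component: "smooth (\<lambda>x. x $ j)"
  unfolding smooth_iff_axis_differentiable
proof
  fix "is" :: "'a list"
  have has_deriv: "((\<lambda>t. (x + t *\<^sub>R axis i 1) $ j) has_real_derivative (if j = i then 1 else 0)) (at 0)" for x i
    by (auto simp: axis_def intro!: derivative_eq_intros)
  show "continuous_on UNIV (partials is (\<lambda>x. x $ j)) \<and> axis_differentiable (partials is (\<lambda>x. x $ j))"
  proof (cases "is" rule: rev_cases)
    case Nil
    then show ?thesis
      by (auto intro!: continuous_intros axis_differentiableI has_deriv)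
  next
    case (snoc js i)
    have "partials [i] (\<lambda>x. x $ j) = (\<lambda>x. if j = i then 1 else 0)"
      by (simp only: partials.simps) (rule ext, rule partial_eqI, rule has_deriv)
    then show ?thesis
      unfolding snoc partials_append using smooth_const[unfolded smooth_iff_axis_differentiable] by metis
  qed
qed

lemma smooth_sum: "finite S \<Longrightarrow> (\<And>j. j \<in> S \<Longrightarrow> smooth (f j)) \<Longrightarrow> smooth (\<lambda>x. \<Sum>j\<in>S. f j x)"
  by (induction S rule: finite_induct) (auto intro: smooth_add smooth_const)

lemma smooth_norm_power2: "smooth (\<lambda>x::real^'n::finite. norm x ^ 2)"
proof -
  have "smooth (\<lambda>x::real^'n. \<Sum>j\<in>UNIV. x $ j * x $ j)"
    by (intro smooth_sum smooth_mult smooth_component) auto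
  moreover have "(\<lambda>x::real^'n. \<Sum>j\<in>UNIV. x $ j * x $ j) = (\<lambda>x. norm x ^ 2)"
    by (simp add: power2_norm_eq_inner inner_vec_def)
  ultimately show ?thesis
    by simp
qed

lemma eventually_axis_line_in_open:
  fixes x :: "real^'n::finite"
  assumes "open S" "x \<in> S"
  shows "eventually (\<lambda>t::real. x + t *\<^sub>R axis i 1 \<in> S) (nhds 0)"
proof -
  have "open ((\<lambda>t::real. x + t *\<^sub>R axis i 1) -` S)"
    by (rule open_vimage[OF assms(1)]) (auto intro!: continuous_intros)
  moreover have "0 \<in> (\<lambda>t::real. x + t *\<^sub>R axis i 1) -` S"
    using assms(2) by simp
  ultimately have "eventually (\<lambda>t. t \<in> (\<lambda>t::real. x + t *\<^sub>R axis i 1) -` S) (nhds 0)"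
    by (rule eventually_nhds_in_open)
  then show ?thesis
    by eventually_elim simp
qed

lemma partials_eq_on_open:
  assumes "open S" "\<forall>x\<in>S. u x = v x"
  shows "\<forall>x\<in>S. partials is u x = partials is v x"
proof (induction "is")
  case (Cons i "is")
  show ?case
  proof
    fix x
    assume "x \<in> S"
    have "eventually (\<lambda>t. partials is u (x + t *\<^sub>R axis i 1) = partials is v (x + t *\<^sub>R axis i 1)) (nhds 0)"
      using eventually_axis_line_in_open[OF assms(1) \<open>x \<in> S\<close>, of i] by eventually_elim (use Cons in auto)
    then show "partials (i # is) u x = partials (i # is) v x"
      by (simp add: partial_def deriv_cong_ev)
  qed
qed (use assms in simp)

lemma partials_eq_0_outside:
  assumes "compact K" "\<forall>x. x \<notin> K \<longrightarrow> w x = 0" "x \<notin> K"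
  shows "partials is w x = 0"
proof -
  have "open (- K)"
    using assms(1) compact_imp_closed by blast
  from partials_eq_on_open[OF this, of w "\<lambda>x. 0" "is"] assms show ?thesis
    by (auto simp: partials_const)
qed

lemma partials_bounded:
  assumes "smooth w" "compact K" "\<forall>x. x \<notin> K \<longrightarrow> w x = 0"
  shows "\<exists>M\<ge>0. \<forall>x. \<bar>partials is w x\<bar> \<le> M"
proof -
  have "continuous_on K (partials is w)"
    using assms(1) smooth_imp_continuous_partials continuous_on_subset by blast
  then have "compact (partials is w ` K)"
    using assms(2) by (rule compact_continuous_image)
  then obtain a where a: "\<forall>y\<in>partials is w ` K. \<bar>y\<bar> \<le> a"
    using compact_imp_bounded bounded_real by metis
  have "\<bar>partials is w x\<bar> \<le> max a 0" for x
    using a partials_eq_0_outside[OF assms(2,3), of x "is"] by (cases "x \<in> K") auto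
  then show ?thesis
    by (intro exI[of _ "max a 0"]) auto
qed

lemma partial_rescale_has_real_derivative:
  assumes "axis_differentiable w"
  shows "((\<lambda>t. w (c *\<^sub>R (x + t *\<^sub>R axis i 1))) has_real_derivative partial i w (c *\<^sub>R x) * c) (at 0)"
proof -
  have "((\<lambda>s. w (c *\<^sub>R x + s *\<^sub>R axis i 1)) has_real_derivative partial i w (c *\<^sub>R x)) (at ((\<lambda>t. c * t) 0))"
    using partial_has_real_derivative[OF assms] by simp
  from DERIV_chain2[OF this DERIV_cmult_Id] show ?thesis
    by (simp add: scaleR_add_right)
qed

lemma partials_rescale:
  assumes "smooth u"
  shows "partials is (\<lambda>x. u (c *\<^sub>R x)) = (\<lambda>x. c ^ length is * partials is u (c *\<^sub>R x))"
proof (induction "is")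
  case (Cons i "is")
  have "axis_differentiable (partials is u)"
    using assms by (simp add: smooth_iff_axis_differentiable)
  have "partials (i # is) (\<lambda>x. u (c *\<^sub>R x)) = partial i (\<lambda>x. c ^ length is * partials is u (c *\<^sub>R x))"
    using Cons by simp
  also have "\<dots> = (\<lambda>x. c ^ length is * (partial i (partials is u) (c *\<^sub>R x) * c))"
    by (rule ext, rule partial_eqI, rule DERIV_cmult, rule partial_rescale_has_real_derivative) fact
  finally show ?case
    by (simp add: mult_ac)
qed simp

lemma smooth_rescale:
  assumes "smooth u"
  shows "smooth (\<lambda>x. u (c *\<^sub>R x))"
  unfolding smooth_iff_axis_differentiable partials_rescale[OF assms]
proof
  fix "is" :: "'a list"
  have cont: "continuous_on UNIV (partials is u)" and ad: "axis_differentiable (partials is u)"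
    using assms by (auto simp: smooth_iff_axis_differentiable)
  have "continuous_on UNIV (\<lambda>x. partials is u (c *\<^sub>R x))"
    by (rule continuous_on_compose2[OF cont]) (auto intro!: continuous_intros)
  moreover have "axis_differentiable (\<lambda>x. partials is u (c *\<^sub>R x))"
    by (rule axis_differentiableI, rule partial_rescale_has_real_derivative[OF ad])
  ultimately show "continuous_on UNIV (\<lambda>x. c ^ length is * partials is u (c *\<^sub>R x)) \<and>
      axis_differentiable (\<lambda>x. c ^ length is * partials is u (c *\<^sub>R x))"
    using axis_differentiable_mult[OF axis_differentiable_const] by (auto intro!: continuous_intros)
qed

text \<open>Derivatives of order \<open>j\<close> of \<open>\<phi>(x) \<psi>(x/\<epsilon>)\<close> grow like \<open>\<epsilon>\<^sup>-\<^sup>j\<close>; tame families record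
  such growth in a form that is preserved by products (Leibniz rule).\<close>

definition tame_family :: "nat \<Rightarrow> (real \<Rightarrow> real^'n::finite \<Rightarrow> real) \<Rightarrow> bool" where
  "tame_family k u \<longleftrightarrow> (\<forall>e. 0 < e \<and> e \<le> 1 \<longrightarrow> smooth (u e)) \<and>
     (\<forall>is. \<exists>C\<ge>0. \<forall>e x. 0 < e \<and> e \<le> 1 \<longrightarrow> \<bar>partials is (u e) x\<bar> \<le> C * (1/e) ^ (k + length is))"

lemma tame_family_partial:
  assumes "tame_family k u"
  shows "tame_family (Suc k) (\<lambda>e. partial i (u e))"
  unfolding tame_family_def
proof (intro conjI allI impI)
  fix js :: "'a list"
  obtain C where "C \<ge> 0" "\<forall>e x. 0 < e \<and> e \<le> 1 \<longrightarrow> \<bar>partials (js @ [i]) (u e) x\<bar> \<le> C * (1/e) ^ (k + length (js @ [i]))"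
    using assms unfolding tame_family_def by blast
  then show "\<exists>C\<ge>0. \<forall>e x. 0 < e \<and> e \<le> 1 \<longrightarrow> \<bar>partials js (partial i (u e)) x\<bar> \<le> C * (1 / e) ^ (Suc k + length js)"
    by (intro exI[of _ C]) (auto simp: partials_append)
qed (use assms in \<open>auto simp: tame_family_def intro: smooth_partial\<close>)

lemma partials_snoc_mult:
  assumes "smooth u" "smooth v"
  shows "partials (js @ [i]) (\<lambda>x. u x * v x)
    = (\<lambda>x. partials js (\<lambda>x. partial i u x * v x) x + partials js (\<lambda>x. u x * partial i v x) x)"
  using assms
  by (simp add: partials_append partial_mult smooth_imp_axis_differentiable smooth_partials_add
      smooth_mult smooth_partial)

lemma tame_family_mult_partials_bound:
  assumes "tame_family k u" "tame_family l v"
  shows "\<exists>C\<ge>0. \<forall>e x. 0 < e \<and> e \<le> 1 \<longrightarrow>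
    \<bar>partials is (\<lambda>x. u e x * v e x) x\<bar> \<le> C * (1/e) ^ (k + l + length is)"
  using assms
proof (induction "is" arbitrary: u v k l rule: rev_induct)
  case Nil
  then obtain C1 C2 where "C1 \<ge> 0" "\<forall>e x. 0 < e \<and> e \<le> 1 \<longrightarrow> \<bar>u e x\<bar> \<le> C1 * (1/e) ^ k"
    and "C2 \<ge> 0" "\<forall>e x. 0 < e \<and> e \<le> 1 \<longrightarrow> \<bar>v e x\<bar> \<le> C2 * (1/e) ^ l"
    unfolding tame_family_def by (metis partials.simps(1) list.size(3) add_0_right)
  then have "\<bar>u e x\<bar> * \<bar>v e x\<bar> \<le> (C1 * (1/e) ^ k) * (C2 * (1/e) ^ l)" if "0 < e" "e \<le> 1" for e x
    using that by (intro mult_mono) auto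
  then have "\<bar>u e x * v e x\<bar> \<le> (C1 * C2) * (1/e) ^ (k + l)" if "0 < e" "e \<le> 1" for e x
    using that by (simp add: abs_mult power_add mult_ac)
  then show ?case
    using \<open>C1 \<ge> 0\<close> \<open>C2 \<ge> 0\<close> by (intro exI[of _ "C1 * C2"]) auto
next
  case (snoc i js)
  have len: "Suc k + l + length js = k + l + length (js @ [i])" "k + Suc l + length js = k + l + length (js @ [i])"
    by simp_all
  obtain C1 where "C1 \<ge> 0" and C1: "\<forall>e x. 0 < e \<and> e \<le> 1 \<longrightarrow>
      \<bar>partials js (\<lambda>x. partial i (u e) x * v e x) x\<bar> \<le> C1 * (1/e) ^ (k + l + length (js @ [i]))"
    using snoc.IH[OF tame_family_partial[OF snoc.prems(1), of i] snoc.prems(2)] unfolding len by blast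
  obtain C2 where "C2 \<ge> 0" and C2: "\<forall>e x. 0 < e \<and> e \<le> 1 \<longrightarrow>
      \<bar>partials js (\<lambda>x. u e x * partial i (v e) x) x\<bar> \<le> C2 * (1/e) ^ (k + l + length (js @ [i]))"
    using snoc.IH[OF snoc.prems(1) tame_family_partial[OF snoc.prems(2), of i]] unfolding len by blast
  have "\<bar>partials (js @ [i]) (\<lambda>x. u e x * v e x) x\<bar> \<le> (C1 + C2) * (1/e) ^ (k + l + length (js @ [i]))"
    if "0 < e" "e \<le> 1" for e x
  proof -
    let ?a = "partials js (\<lambda>x. partial i (u e) x * v e x) x"
    let ?b = "partials js (\<lambda>x. u e x * partial i (v e) x) x"
    have "partials (js @ [i]) (\<lambda>x. u e x * v e x) x = ?a + ?b"
      using that snoc.prems by (simp add: partials_snoc_mult tame_family_def)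
    then have "\<bar>partials (js @ [i]) (\<lambda>x. u e x * v e x) x\<bar> \<le> \<bar>?a\<bar> + \<bar>?b\<bar>"
      by (simp only: abs_triangle_ineq)
    then show ?thesis
      using that C1[rule_format, of e x] C2[rule_format, of e x] unfolding distrib_right by linarith
  qed
  then show ?case
    using \<open>C1 \<ge> 0\<close> \<open>C2 \<ge> 0\<close> by (intro exI[of _ "C1 + C2"]) auto
qed

lemma tame_family_mult:
  assumes "tame_family k u" "tame_family l v"
  shows "tame_family (k + l) (\<lambda>e x. u e x * v e x)"
  unfolding tame_family_def
  using assms tame_family_mult_partials_bound[OF assms] by (auto simp: tame_family_def intro: smooth_mult)

lemma tame_family_const:
  assumes "smooth w" "compact K" "\<forall>x. x \<notin> K \<longrightarrow> w x = 0"
  shows "tame_family 0 (\<lambda>e. w)"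
  unfolding tame_family_def
proof (intro conjI allI impI)
  fix "is" :: "'a list"
  obtain M where "M \<ge> 0" and M: "\<forall>x. \<bar>partials is w x\<bar> \<le> M"
    using partials_bounded[OF assms] by blast
  have "\<bar>partials is w x\<bar> \<le> M * (1/e) ^ length is" if "0 < e" "e \<le> 1" for e x
  proof -
    have "M \<le> M * (1/e) ^ length is"
      using that \<open>M \<ge> 0\<close> by (simp add: mult_le_cancel_left1 one_le_power)
    with M show ?thesis
      by (meson order_trans)
  qed
  then show "\<exists>C\<ge>0. \<forall>e x. 0 < e \<and> e \<le> 1 \<longrightarrow> \<bar>partials is w x\<bar> \<le> C * (1 / e) ^ (0 + length is)"
    using \<open>M \<ge> 0\<close> by auto
qed (use assms in auto)

lemma tame_family_rescale:
  assumes "smooth w" "compact K" "\<forall>x. x \<notin> K \<longrightarrow> w x = 0"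
  shows "tame_family 0 (\<lambda>e x. w ((1/e) *\<^sub>R x))"
  unfolding tame_family_def
proof (intro conjI allI impI)
  fix "is" :: "'a list"
  obtain M where "M \<ge> 0" and M: "\<forall>x. \<bar>partials is w x\<bar> \<le> M"
    using partials_bounded[OF assms] by blast
  have "\<bar>partials is (\<lambda>x. w ((1/e) *\<^sub>R x)) x\<bar> \<le> M * (1/e) ^ length is" if "0 < e" for e x
    using that M by (simp add: partials_rescale[OF assms(1)] abs_mult mult.commute mult_left_mono)
  then show "\<exists>C\<ge>0. \<forall>e x. 0 < e \<and> e \<le> 1 \<longrightarrow> \<bar>partials is (\<lambda>x. w ((1/e) *\<^sub>R x)) x\<bar> \<le> C * (1 / e) ^ (0 + length is)"
    using \<open>M \<ge> 0\<close> by auto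
qed (use assms in \<open>auto intro: smooth_rescale\<close>)

section \<open>A smooth cutoff function\<close>

definition cutoff :: "real^'n::finite \<Rightarrow> real" where
  "cutoff x = (let a = inv_exp_derivs 0 (2 - norm x ^ 2); b = inv_exp_derivs 0 (norm x ^ 2 - 1) in a / (a + b))"

lemma smooth_cutoff: "smooth cutoff"
proof -
  define a where "a x = inv_exp_derivs 0 (2 - norm x ^ 2)" for x :: "real^'a"
  define b where "b x = inv_exp_derivs 0 (norm x ^ 2 - 1)" for x :: "real^'a"
  have "smooth a" "smooth b"
    unfolding a_def[abs_def] b_def[abs_def]
    by (auto intro!: smooth_deriv_seq_comp[OF deriv_seq_inv_exp] smooth_diff smooth_const smooth_norm_power2)
  moreover have "a x + b x \<in> {0<..}" for x
    unfolding a_def b_def inv_exp_derivs_0 by (auto simp: add_pos_nonneg add_nonneg_pos)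
  ultimately have "smooth (\<lambda>x. inverse_derivs 0 (a x + b x) * a x)"
    by (intro smooth_deriv_seq_comp_mult[OF _ _ deriv_seq_inverse]) (auto intro: smooth_add)
  moreover have "(\<lambda>x. inverse_derivs 0 (a x + b x) * a x) = cutoff"
    by (auto simp: cutoff_def Let_def a_def b_def inverse_derivs_0 divide_inverse mult.commute)
  ultimately show ?thesis
    by simp
qed

lemma cutoff_eq_1: "norm x \<le> 1 \<Longrightarrow> cutoff x = 1"
proof -
  assume "norm x \<le> 1"
  then have "norm x ^ 2 \<le> 1"
    by (simp add: power_le_one)
  then show "cutoff x = 1"
    by (simp add: cutoff_def Let_def inv_exp_derivs_0)
qed

lemma cutoff_eq_0: "2 \<le> norm x \<Longrightarrow> cutoff x = 0"
proof -
  assume "2 \<le> norm x"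
  then have "(2::real)^2 \<le> norm x ^ 2"
    by (intro power_mono) auto
  then show "cutoff x = 0"
    by (simp add: cutoff_def Let_def inv_exp_derivs_0)
qed

lemma ball_in_sets_lebesgue: "ball (c::'a::euclidean_space) r \<in> sets lebesgue"
  using lmeasurable_ball by (rule fmeasurableD)

lemma borel_measurable_indicator_ball:
  "indicator (ball (c::'a::euclidean_space) r) \<in> borel_measurable (lebesgue_on S)"
  by (rule measurable_restrict_space1, rule borel_measurable_indicator, rule ball_in_sets_lebesgue)

lemma integrable_mult_bounded:
  fixes h w :: "'a \<Rightarrow> real"
  assumes "integrable M h" "w \<in> borel_measurable M" "\<forall>x. \<bar>w x\<bar> \<le> K"
  shows "integrable M (\<lambda>x. h x * w x)"
proof (rule Bochner_Integration.integrable_bound[where f= "\<lambda>x. K * \<bar>h x\<bar>"])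
  show "integrable M (\<lambda>x. K * \<bar>h x\<bar>)"
    using assms(1) by auto
  show "(\<lambda>x. h x * w x) \<in> borel_measurable M"
    using assms(1,2) by measurable
  have "\<bar>h x\<bar> * \<bar>w x\<bar> \<le> \<bar>K * \<bar>h x\<bar>\<bar>" for x
    using mult_right_mono[OF assms(3)[rule_format, of x] abs_ge_zero[of "h x"]] by (simp add: mult.commute)
  then show "AE x in M. norm (h x * w x) \<le> norm (K * \<bar>h x\<bar>)"
    by (simp add: abs_mult)
qed

lemma integrable_mult_indicator_ball:
  fixes h :: "'a::euclidean_space \<Rightarrow> real"
  assumes "integrable (lebesgue_on S) h"
  shows "integrable (lebesgue_on S) (\<lambda>x. h x * indicator (ball c r) x)"
  by (rule integrable_mult_bounded[OF assms borel_measurable_indicator_ball, where K=1]) (auto simp: indicator_def)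

lemma in_Lp_imp_integrable:
  assumes "in_Lp p U f" "1 \<le> p" "U \<in> lmeasurable"
  shows "integrable (lebesgue_on U) f"
proof (rule Bochner_Integration.integrable_bound[where f= "\<lambda>x. 1 + \<bar>f x\<bar> powr p"])
  interpret finite_measure "lebesgue_on U"
    using assms(3) by (rule finite_measure_lebesgue_on)
  show "integrable (lebesgue_on U) (\<lambda>x. 1 + \<bar>f x\<bar> powr p)"
    using assms(1) unfolding in_Lp_def by auto
  show "f \<in> borel_measurable (lebesgue_on U)"
    using assms(1) unfolding in_Lp_def by auto
  have "\<bar>f x\<bar> \<le> 1 + \<bar>f x\<bar> powr p" for x
  proof (cases "\<bar>f x\<bar> \<le> 1")
    case False
    then have "\<bar>f x\<bar> powr 1 \<le> \<bar>f x\<bar> powr p"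
      using assms(2) by (intro powr_mono) auto
    then show ?thesis
      using False by simp
  qed (simp add: add_increasing2)
  then show "AE x in lebesgue_on U. norm (f x) \<le> norm (1 + \<bar>f x\<bar> powr p)"
    by simp
qed

lemma integral_lebesgue_on_remove_point:
  fixes h :: "'a::euclidean_space \<Rightarrow> real"
  assumes "S \<in> sets lebesgue"
  shows "integral\<^sup>L (lebesgue_on (S - {a})) h = integral\<^sup>L (lebesgue_on S) h"
proof -
  have "integral\<^sup>L (lebesgue_on (S - {a})) h = integral\<^sup>L lebesgue (\<lambda>x. indicator (S - {a}) x *\<^sub>R h x)"
    using assms by (intro integral_restrict_space) auto
  also have "\<dots> = integral\<^sup>L lebesgue (\<lambda>x. indicator S x *\<^sub>R h x)"
    by (rule integral_discrete_difference[where X="{a}"]) (auto simp: emeasure_completion indicator_def)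
  also have "\<dots> = integral\<^sup>L (lebesgue_on S) h"
    using assms by (intro integral_restrict_space[symmetric]) auto
  finally show ?thesis .
qed

lemma integral_small_ball_tendsto_0:
  fixes h :: "'a::euclidean_space \<Rightarrow> real"
  assumes S: "S \<in> sets lebesgue" and h: "integrable (lebesgue_on S) h"
  shows "((\<lambda>r. LINT x|lebesgue_on S. h x * indicator (ball 0 r) x) \<longlongrightarrow> 0) (at_right 0)"
proof -
  let ?M = "lebesgue_on S"
  define s where "s t x = h x * indicator (ball 0 (inverse t)) x" for t x
  have "AE x in lebesgue. x \<noteq> (0::'a)"
    by (rule AE_completion[OF AE_lborel_singleton])
  then have "AE x in ?M. x \<noteq> 0"
    using S by (subst AE_restrict_space_iff) auto
  then have "AE x in ?M. ((\<lambda>t. s t x) \<longlongrightarrow> 0) at_top"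
  proof eventually_elim
    case (elim x)
    have "eventually (\<lambda>t. inverse t < norm x) at_top"
      using elim by (intro order_tendstoD(2)[OF tendsto_inverse_0_at_top[OF filterlim_ident]]) auto
    then have "eventually (\<lambda>t. s t x = 0) at_top"
      by eventually_elim (simp add: s_def)
    then show ?case
      by (rule tendsto_eventually)
  qed
  moreover have "\<forall>\<^sub>F t in at_top. AE x in ?M. norm (s t x) \<le> \<bar>h x\<bar>"
    by (simp add: s_def indicator_def)
  moreover have "s t \<in> borel_measurable ?M" for t
    using borel_measurable_integrable[OF h] borel_measurable_indicator_ball unfolding s_def by measurable
  ultimately have "((\<lambda>t. integral\<^sup>L ?M (s t)) \<longlongrightarrow> integral\<^sup>L ?M (\<lambda>x. 0)) at_top"
    using h by (intro integral_dominated_convergence_at_top[where w="\<lambda>x. \<bar>h x\<bar>"]) auto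
  then have "((\<lambda>r. integral\<^sup>L ?M (s (inverse r))) \<longlongrightarrow> 0) (at_right 0)"
    by (intro filterlim_compose[OF _ filterlim_inverse_at_top_right]) simp
  then show ?thesis
    unfolding s_def inverse_inverse_eq .
qed

lemma integral_indicator_ball:
  assumes "0 \<le> r" "r \<le> 1"
  shows "(LINT x|lebesgue_on (ball (0::'a::euclidean_space) 1). indicator (ball 0 r) x)
    = r ^ DIM('a) * measure lborel (ball (0::'a) 1)"
proof -
  have sub: "ball (0::'a) r \<subseteq> ball 0 1"
    using assms by auto
  then have "(LINT x|lebesgue_on (ball (0::'a) 1). indicator (ball 0 r) x) = measure (lebesgue_on (ball 0 1)) (ball (0::'a) r)"
    using ball_in_sets_lebesgue by (simp add: Int_absorb2)
  also have "\<dots> = measure lebesgue (ball (0::'a) r)"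
    using ball_in_sets_lebesgue sub by (intro measure_restrict_space) auto
  also have "\<dots> = r ^ DIM('a) * measure lborel (ball (0::'a) 1)"
    using content_ball_conv_unit_ball[OF assms(1), of "0::'a"] by simp
  finally show ?thesis .
qed

lemma abs_integral_mult_le_indicator_ball:
  fixes h w :: "'a::euclidean_space \<Rightarrow> real"
  assumes h: "integrable (lebesgue_on S) h" and w: "w \<in> borel_measurable (lebesgue_on S)"
    and bound: "\<forall>x. \<bar>w x\<bar> \<le> C" and vanish: "\<forall>x. x \<notin> ball 0 r \<longrightarrow> w x = 0"
  shows "\<bar>LINT x|lebesgue_on S. h x * w x\<bar> \<le> C * (LINT x|lebesgue_on S. \<bar>h x\<bar> * indicator (ball 0 r) x)"
proof -
  have "\<bar>LINT x|lebesgue_on S. h x * w x\<bar> \<le> (LINT x|lebesgue_on S. \<bar>h x * w x\<bar>)"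
    by (rule integral_abs_bound)
  also have "\<dots> \<le> (LINT x|lebesgue_on S. C * (\<bar>h x\<bar> * indicator (ball 0 r) x))"
  proof (rule integral_mono)
    show "integrable (lebesgue_on S) (\<lambda>x. \<bar>h x * w x\<bar>)"
      using integrable_mult_bounded[OF h w bound] by auto
    show "integrable (lebesgue_on S) (\<lambda>x. C * (\<bar>h x\<bar> * indicator (ball 0 r) x))"
      using integrable_mult_indicator_ball[OF integrable_abs[OF h]] by auto
    show "\<bar>h x * w x\<bar> \<le> C * (\<bar>h x\<bar> * indicator (ball 0 r) x)" for x
      using mult_right_mono[OF bound[rule_format, of x] abs_ge_zero[of "h x"]] vanish
      by (cases "x \<in> ball 0 r") (auto simp: abs_mult mult.commute)
  qed
  finally show ?thesis
    by simp
qed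


section \<open>The distributional defect of a test function\<close>

lemma vanishes_outside_closure_support: "\<forall>x. x \<notin> closure {x. \<phi> x \<noteq> 0} \<longrightarrow> \<phi> x = 0"
  using closure_subset[of "{x. \<phi> x \<noteq> 0}"] by auto

lemma test_function_mult_smooth:
  assumes "test_function U \<phi>" "smooth w"
  shows "test_function U (\<lambda>x. \<phi> x * w x)"
proof -
  have "closure {x. \<phi> x * w x \<noteq> 0} \<subseteq> closure {x. \<phi> x \<noteq> 0}"
    by (rule closure_mono) auto
  moreover have "bounded {x. \<phi> x \<noteq> 0}"
    using assms(1) by (simp add: test_function_def compact_closure)
  then have "compact (closure {x. \<phi> x * w x \<noteq> 0})"
    unfolding compact_closure by (rule bounded_subset) auto
  ultimately show ?thesis
    using assms by (auto simp: test_function_def intro: smooth_mult)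
qed

lemma test_function_partials_bounded:
  assumes "test_function U \<phi>"
  shows "\<exists>M\<ge>0. \<forall>x. \<bar>partials is \<phi> x\<bar> \<le> M"
proof (rule partials_bounded)
  show "smooth \<phi>" "compact (closure {x. \<phi> x \<noteq> 0})"
    using assms by (auto simp: test_function_def)
  show "\<forall>x. x \<notin> closure {x. \<phi> x \<noteq> 0} \<longrightarrow> \<phi> x = 0"
    by (rule vanishes_outside_closure_support)
qed

lemma integrable_mult_partials:
  assumes "integrable (lebesgue_on (ball 0 1)) h" "test_function U \<phi>"
  shows "integrable (lebesgue_on (ball (0::real^'n::finite) 1)) (\<lambda>x. h x * partials is \<phi> x)"
proof -
  obtain M where M: "\<forall>x. \<bar>partials is \<phi> x\<bar> \<le> M"
    using test_function_partials_bounded[OF assms(2)] by blast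
  have "partials is \<phi> \<in> borel_measurable (lebesgue_on (ball 0 1))"
    using assms(2) by (intro continuous_imp_measurable_on_sets_lebesgue continuous_on_subset[OF smooth_imp_continuous_partials])
      (auto simp: test_function_def ball_in_sets_lebesgue)
  from integrable_mult_bounded[OF assms(1) this M] show ?thesis .
qed
lemma Dalpha_eq_partials:
  obtains L where "length L = mi_order \<alpha>" "\<And>w. Dalpha \<alpha> w = partials L w"
proof -
  obtain xs where xs: "set xs = (UNIV :: 'a set)" "distinct xs"
    using finite_distinct_list[of "UNIV :: 'a set"] by auto
  have "count_list (concat (map (\<lambda>i. replicate (\<alpha> i) i) ys)) j = (if j \<in> set ys then \<alpha> j else 0)"
    if "distinct ys" for ys j
    using that by (induction ys) (auto simp: count_list_eq_length_filter filter_replicate)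
  with xs have "\<exists>is. \<forall>i. count_list is i = \<alpha> i"
    by (intro exI[of _ "concat (map (\<lambda>i. replicate (\<alpha> i) i) xs)"]) auto
  then have L: "\<forall>i. count_list (SOME is. \<forall>i. count_list is i = \<alpha> i) i = \<alpha> i"
    by (rule someI_ex)
  have "length (SOME is. \<forall>i. count_list is i = \<alpha> i) = sum (count_list (SOME is. \<forall>i. count_list is i = \<alpha> i)) UNIV"
    by (simp add: sum_count_set)
  also have "\<dots> = mi_order \<alpha>"
    using L by (simp add: mi_order_def)
  finally show thesis
    by (rule that) (simp add: Dalpha_def)
qed

definition distrib_defect :: "('n::finite \<Rightarrow> nat) \<Rightarrow> (real^'n \<Rightarrow> real) \<Rightarrow> (real^'n \<Rightarrow> real)
    \<Rightarrow> (real^'n \<Rightarrow> real) \<Rightarrow> real" where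
  "distrib_defect \<alpha> f g \<phi> = (LINT x|lebesgue_on (ball 0 1). f x * Dalpha \<alpha> \<phi> x)
     - (-1) ^ mi_order \<alpha> * (LINT x|lebesgue_on (ball 0 1). g x * \<phi> x)"

lemma distrib_deriv_eq_iff_distrib_defect:
  "distrib_deriv_eq \<alpha> f g (ball 0 1) \<longleftrightarrow> (\<forall>\<phi>. test_function (ball 0 1) \<phi> \<longrightarrow> distrib_defect \<alpha> f g \<phi> = 0)"
  by (simp add: distrib_deriv_eq_def distrib_defect_def)

lemma distrib_defect_eq_0_punctured:
  assumes "distrib_deriv_eq \<alpha> f g (ball 0 1 - {0})" "test_function (ball 0 1 - {0}) \<phi>"
  shows "distrib_defect \<alpha> f g \<phi> = 0"
  using assms by (simp add: distrib_deriv_eq_def distrib_defect_def integral_lebesgue_on_remove_point[OF ball_in_sets_lebesgue])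

lemma distrib_defect_add:
  assumes f: "integrable (lebesgue_on (ball 0 1)) f" and g: "integrable (lebesgue_on (ball 0 1)) g"
    and u: "test_function U u" and v: "test_function V v"
  shows "distrib_defect \<alpha> f g (\<lambda>x. u x + v x) = distrib_defect \<alpha> f g u + distrib_defect \<alpha> f g v"
proof -
  let ?M = "lebesgue_on (ball 0 1)"
  obtain L where D: "\<And>w. Dalpha \<alpha> w = partials L w"
    using Dalpha_eq_partials by blast
  have add: "partials L (\<lambda>x. u x + v x) = (\<lambda>x. partials L u x + partials L v x)"
    using u v by (simp add: smooth_partials_add test_function_def)
  have "(LINT x|?M. f x * Dalpha \<alpha> (\<lambda>x. u x + v x) x)
      = (LINT x|?M. f x * Dalpha \<alpha> u x) + (LINT x|?M. f x * Dalpha \<alpha> v x)"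
    unfolding D add distrib_left
    by (intro Bochner_Integration.integral_add integrable_mult_partials[OF f u] integrable_mult_partials[OF f v])
  moreover have "(LINT x|?M. g x * (u x + v x)) = (LINT x|?M. g x * u x) + (LINT x|?M. g x * v x)"
    using integrable_mult_partials[OF g u, of "[]"] integrable_mult_partials[OF g v, of "[]"]
    unfolding distrib_left by (intro Bochner_Integration.integral_add) simp_all
  ultimately show ?thesis
    by (simp add: distrib_defect_def ring_distribs)
qed

lemma abs_distrib_defect_le:
  assumes f: "integrable (lebesgue_on (ball 0 1)) f" and g: "integrable (lebesgue_on (ball 0 1)) g"
    and \<phi>: "test_function (ball 0 r) \<phi>"
    and C: "\<forall>x. \<bar>Dalpha \<alpha> \<phi> x\<bar> \<le> C" and C0: "\<forall>x. \<bar>\<phi> x\<bar> \<le> C0"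
  shows "\<bar>distrib_defect \<alpha> f g \<phi>\<bar>
    \<le> C * (LINT x|lebesgue_on (ball 0 1). \<bar>f x\<bar> * indicator (ball 0 r) x)
      + C0 * (LINT x|lebesgue_on (ball 0 1). \<bar>g x\<bar> * indicator (ball 0 r) x)"
proof -
  let ?M = "lebesgue_on (ball 0 1)"
  let ?K = "closure {x. \<phi> x \<noteq> 0}"
  obtain L where D: "\<And>w. Dalpha \<alpha> w = partials L w"
    using Dalpha_eq_partials by blast
  have K: "compact ?K" "?K \<subseteq> ball 0 r" and "smooth \<phi>"
    using \<phi> by (auto simp: test_function_def)
  have vanish: "\<forall>x. x \<notin> ball 0 r \<longrightarrow> partials is \<phi> x = 0" for "is"
    using K partials_eq_0_outside[OF K(1) vanishes_outside_closure_support] by blast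
  have meas: "partials is \<phi> \<in> borel_measurable ?M" for "is"
    by (rule continuous_imp_measurable_on_sets_lebesgue[OF continuous_on_subset ball_in_sets_lebesgue])
      (use smooth_imp_continuous_partials[OF \<open>smooth \<phi>\<close>] in auto)
  have "\<bar>LINT x|?M. f x * partials L \<phi> x\<bar> \<le> C * (LINT x|?M. \<bar>f x\<bar> * indicator (ball 0 r) x)"
    using C by (intro abs_integral_mult_le_indicator_ball[OF f meas _ vanish]) (simp add: D)
  moreover have "\<bar>LINT x|?M. g x * partials [] \<phi> x\<bar> \<le> C0 * (LINT x|?M. \<bar>g x\<bar> * indicator (ball 0 r) x)"
    using C0 by (intro abs_integral_mult_le_indicator_ball[OF g meas _ vanish]) simp
  moreover have "\<bar>a - (-1) ^ k * b\<bar> \<le> \<bar>a\<bar> + \<bar>b\<bar>" for a b :: real and k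
    using abs_triangle_ineq4[of a "(-1) ^ k * b"] by (simp add: abs_mult)
  ultimately show ?thesis
    unfolding distrib_defect_def D partials.simps(1) by (meson add_mono order_trans)
qed

lemma test_function_mult_one_minus_cutoff:
  assumes "test_function (ball 0 1) \<phi>" "0 < e"
  shows "test_function (ball 0 1 - {0}) (\<lambda>x. \<phi> x * (1 - cutoff ((1/e) *\<^sub>R x)))"
proof -
  have tf: "test_function (ball 0 1) (\<lambda>x. \<phi> x * (1 - cutoff ((1/e) *\<^sub>R x)))"
    using assms(1) by (intro test_function_mult_smooth smooth_diff smooth_const smooth_rescale[OF smooth_cutoff])
  have "{x. \<phi> x * (1 - cutoff ((1/e) *\<^sub>R x)) \<noteq> 0} \<subseteq> - ball 0 e"
    using assms(2) cutoff_eq_1[of "(1/e) *\<^sub>R x" for x] by (force simp: divide_le_eq)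
  then have "closure {x. \<phi> x * (1 - cutoff ((1/e) *\<^sub>R x)) \<noteq> 0} \<subseteq> - ball 0 e"
    by (rule closure_minimal) auto
  with tf assms(2) show ?thesis
    by (auto simp: test_function_def)
qed

lemma test_function_mult_cutoff:
  assumes "test_function U \<phi>" "0 < e" "2 * e < r"
  shows "test_function (ball 0 r) (\<lambda>x. \<phi> x * cutoff ((1/e) *\<^sub>R x))"
proof -
  have tf: "test_function U (\<lambda>x. \<phi> x * cutoff ((1/e) *\<^sub>R x))"
    using assms(1) by (intro test_function_mult_smooth smooth_rescale[OF smooth_cutoff])
  have "{x. \<phi> x * cutoff ((1/e) *\<^sub>R x) \<noteq> 0} \<subseteq> cball 0 (2 * e)"
    using assms(2) cutoff_eq_0[of "(1/e) *\<^sub>R x" for x] by (force simp: le_divide_eq mult.commute)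
  then have "closure {x. \<phi> x * cutoff ((1/e) *\<^sub>R x) \<noteq> 0} \<subseteq> cball 0 (2 * e)"
    by (rule closure_minimal) auto
  with tf assms(3) show ?thesis
    by (auto simp: test_function_def)
qed

lemma partials_mult_rescaled_cutoff_bounded:
  assumes "test_function U \<phi>"
  obtains C where "C \<ge> 0"
    "\<And>e x. 0 < e \<Longrightarrow> e \<le> 1 \<Longrightarrow> \<bar>partials is (\<lambda>x. \<phi> x * cutoff ((1/e) *\<^sub>R x)) x\<bar> \<le> C * (1/e) ^ length is"
proof -
  have "smooth \<phi>" "compact (closure {x. \<phi> x \<noteq> 0})"
    using assms by (auto simp: test_function_def)
  moreover have "\<forall>x. x \<notin> cball 0 2 \<longrightarrow> cutoff x = 0"
    by (auto intro: cutoff_eq_0)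
  ultimately have "tame_family (0 + 0) (\<lambda>e x. \<phi> x * cutoff ((1/e) *\<^sub>R x))"
    by (intro tame_family_mult tame_family_const[OF _ _ vanishes_outside_closure_support]
        tame_family_rescale[OF smooth_cutoff compact_cball])
  then have "\<forall>is. \<exists>C\<ge>0. \<forall>e x. 0 < e \<and> e \<le> 1 \<longrightarrow>
      \<bar>partials is (\<lambda>x. \<phi> x * cutoff ((1/e) *\<^sub>R x)) x\<bar> \<le> C * (1/e) ^ (0 + 0 + length is)"
    unfolding tame_family_def by (rule conjunct2)
  from spec[OF this, of "is"] show thesis
    using that by (elim exE conjE) simp
qed

lemma abs_distrib_defect_le_small_ball_integrals:
  fixes f g \<phi> :: "real^'n::finite \<Rightarrow> real"
  assumes hyp: "distrib_deriv_eq \<alpha> f g (ball 0 1 - {0})"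
    and f: "integrable (lebesgue_on (ball 0 1)) f" and g: "integrable (lebesgue_on (ball 0 1)) g"
    and \<phi>: "test_function (ball 0 1) \<phi>"
  obtains C where "C \<ge> 0" "\<And>r. 0 < r \<Longrightarrow> r \<le> 1 \<Longrightarrow> \<bar>distrib_defect \<alpha> f g \<phi>\<bar>
    \<le> C * ((1/r) ^ mi_order \<alpha> * (LINT x|lebesgue_on (ball 0 1). \<bar>f x\<bar> * indicator (ball 0 r) x)
           + (LINT x|lebesgue_on (ball 0 1). \<bar>g x\<bar> * indicator (ball 0 r) x))"
proof -
  let ?M = "lebesgue_on (ball (0::real^'n) 1)"
  let ?m = "mi_order \<alpha>"
  let ?F = "\<lambda>r. LINT x|?M. \<bar>f x\<bar> * indicator (ball 0 r) x"
  let ?G = "\<lambda>r. LINT x|?M. \<bar>g x\<bar> * indicator (ball 0 r) x"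
  let ?\<phi>\<^sub>e = "\<lambda>e x. \<phi> x * cutoff ((1/e) *\<^sub>R x)"
  obtain L where L: "length L = ?m" "\<And>w. Dalpha \<alpha> w = partials L w"
    using Dalpha_eq_partials by blast
  obtain C1 where "C1 \<ge> 0" and C1: "\<And>e x. 0 < e \<Longrightarrow> e \<le> 1 \<Longrightarrow> \<bar>Dalpha \<alpha> (?\<phi>\<^sub>e e) x\<bar> \<le> C1 * (1/e) ^ ?m"
    using partials_mult_rescaled_cutoff_bounded[OF \<phi>, of L] unfolding L by blast
  obtain C0 where "C0 \<ge> 0" and C0: "\<And>e x. 0 < e \<Longrightarrow> e \<le> 1 \<Longrightarrow> \<bar>?\<phi>\<^sub>e e x\<bar> \<le> C0"
    using partials_mult_rescaled_cutoff_bounded[OF \<phi>, of "[]"] by auto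
  show thesis
  proof (rule that)
    show "3 ^ ?m * C1 + C0 \<ge> 0"
      using \<open>C1 \<ge> 0\<close> \<open>C0 \<ge> 0\<close> by simp
    fix r :: real
    assume r: "0 < r" "r \<le> 1"
    define e where "e = r / 3"
    have e: "0 < e" "e \<le> 1" "2 * e < r"
      using r by (auto simp: e_def)
    have "distrib_defect \<alpha> f g \<phi>
        = distrib_defect \<alpha> f g (\<lambda>x. \<phi> x * (1 - cutoff ((1/e) *\<^sub>R x))) + distrib_defect \<alpha> f g (?\<phi>\<^sub>e e)"
      using distrib_defect_add[OF f g test_function_mult_one_minus_cutoff[OF \<phi> e(1)] test_function_mult_cutoff[OF \<phi> e(1,3)]]
      by (simp add: algebra_simps)
    also have "\<dots> = distrib_defect \<alpha> f g (?\<phi>\<^sub>e e)"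
      using distrib_defect_eq_0_punctured[OF hyp test_function_mult_one_minus_cutoff[OF \<phi> e(1)]] by simp
    finally have "\<bar>distrib_defect \<alpha> f g \<phi>\<bar> \<le> C1 * (1/e) ^ ?m * ?F r + C0 * ?G r"
      using abs_distrib_defect_le[OF f g test_function_mult_cutoff[OF \<phi> e(1,3)]] C1[OF e(1,2)] C0[OF e(1,2)] by simp
    also have "\<dots> = 3 ^ ?m * C1 * ((1/r) ^ ?m * ?F r) + C0 * ?G r"
      by (simp add: e_def power_divide)
    also have "\<dots> \<le> (3 ^ ?m * C1 + C0) * ((1/r) ^ ?m * ?F r + ?G r)"
      using \<open>C1 \<ge> 0\<close> \<open>C0 \<ge> 0\<close> r by (simp add: algebra_simps integral_nonneg_AE)
    finally show "\<bar>distrib_defect \<alpha> f g \<phi>\<bar> \<le> (3 ^ ?m * C1 + C0) * ((1/r) ^ ?m * ?F r + ?G r)" .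
  qed
qed

section \<open>Smallness of the defect\<close>

lemma le_add_powr_split:
  fixes y l p :: real
  assumes "0 \<le> y" "0 < l" "1 \<le> p"
  shows "y \<le> l + l powr (1 - p) * y powr p"
proof (cases "y \<le> l")
  case True
  then show ?thesis
    by (simp add: add_increasing2)
next
  case False
  then have "y powr p * y powr (1 - p) \<le> y powr p * l powr (1 - p)"
    using assms by (intro mult_left_mono powr_mono2') auto
  moreover have "y powr p * y powr (1 - p) = y"
    using False assms by (simp add: powr_add[symmetric])
  ultimately show ?thesis
    using assms by (simp add: mult.commute add_increasing)
qed

lemma powr_cut_level:
  fixes t r p :: real
  assumes "m < n" "p = real n / (real n - real m)" "0 < t" "0 < r"
  shows "(t / r ^ (n - m)) powr (1 - p) = t powr (1 - p) * r ^ m"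
proof -
  have "(r ^ (n - m)) powr (1 - p) = r powr (real (n - m) * (1 - p))"
    using assms(4) by (simp add: powr_realpow[symmetric] powr_powr)
  also have "real (n - m) * (1 - p) = - real m"
    using assms(1) by (simp add: assms(2) of_nat_diff field_simps)
  also have "r powr (- real m) = inverse (r ^ m)"
    using assms(4) by (simp add: powr_minus powr_realpow)
  finally have "(r ^ (n - m)) powr (1 - p) = inverse (r ^ m)" .
  moreover have "(t / r ^ (n - m)) powr (1 - p) = t powr (1 - p) / (r ^ (n - m)) powr (1 - p)"
    using assms(3,4) by (simp add: powr_divide)
  ultimately show ?thesis
    by (simp add: divide_inverse)
qed

text \<open>This replaces H\<ouml>lder's inequality: with \<open>p = n / (n - m)\<close>, cutting \<open>|f|\<close> at the level
  \<open>l = t / r\<^sup>n\<^sup>-\<^sup>m\<close> turns both \<open>l |B\<^sub>r|\<close> and \<open>l\<^sup>1\<^sup>-\<^sup>p\<close> into multiples of \<open>r\<^sup>m\<close>.\<close>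

lemma small_ball_integral_le:
  fixes f :: "real^'n::finite \<Rightarrow> real"
  assumes f: "integrable (lebesgue_on (ball 0 1)) f"
    and fp: "integrable (lebesgue_on (ball 0 1)) (\<lambda>x. \<bar>f x\<bar> powr p)"
    and m: "m < CARD('n)" and p: "p = real CARD('n) / (real CARD('n) - real m)"
    and t: "0 < t" and r: "0 < r" "r \<le> 1"
  shows "(LINT x|lebesgue_on (ball 0 1). \<bar>f x\<bar> * indicator (ball 0 r) x)
    \<le> r ^ m * (t * measure lborel (ball (0::real^'n) 1)
       + t powr (1 - p) * (LINT x|lebesgue_on (ball 0 1). \<bar>f x\<bar> powr p * indicator (ball 0 r) x))"
proof -
  let ?M = "lebesgue_on (ball (0::real^'n) 1)"
  let ?n = "CARD('n)"
  let ?V = "measure lborel (ball (0::real^'n) 1)"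
  let ?I = "LINT x|?M. \<bar>f x\<bar> powr p * indicator (ball 0 r) x"
  define l where "l = t / r ^ (?n - m)"
  have l: "0 < l"
    using t r by (simp add: l_def)
  have "1 \<le> p"
    using m by (simp add: p le_divide_eq)
  have one: "integrable ?M (\<lambda>_. 1::real)"
    by (rule finite_measure.integrable_const) (simp add: finite_measure_lebesgue_on)
  have ind: "integrable ?M (indicator (ball 0 r) :: real^'n \<Rightarrow> real)"
    using integrable_mult_indicator_ball[OF one, of 0 r] by simp
  have "(LINT x|?M. \<bar>f x\<bar> * indicator (ball 0 r) x)
      \<le> (LINT x|?M. l * indicator (ball 0 r) x + l powr (1 - p) * (\<bar>f x\<bar> powr p * indicator (ball 0 r) x))"
  proof (rule integral_mono)
    show "integrable ?M (\<lambda>x. \<bar>f x\<bar> * indicator (ball 0 r) x)"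
      by (rule integrable_mult_indicator_ball[OF integrable_abs[OF f]])
    show "integrable ?M (\<lambda>x. l * indicator (ball 0 r) x + l powr (1 - p) * (\<bar>f x\<bar> powr p * indicator (ball 0 r) x))"
      using ind integrable_mult_indicator_ball[OF fp] by simp
    show "\<bar>f x\<bar> * indicator (ball 0 r) x \<le> l * indicator (ball 0 r) x + l powr (1 - p) * (\<bar>f x\<bar> powr p * indicator (ball 0 r) x)" for x
      using le_add_powr_split[OF abs_ge_zero l \<open>1 \<le> p\<close>] by (simp add: indicator_def)
  qed
  also have "\<dots> = l * r ^ ?n * ?V + l powr (1 - p) * ?I"
    using ind integrable_mult_indicator_ball[OF fp] integral_indicator_ball[where 'a="real^'n", of r] r by simp
  also have "l * r ^ ?n = t * r ^ m"
  proof -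
    have "r ^ ?n = r ^ (?n - m) * r ^ m"
      using m by (simp add: power_add[symmetric])
    then show ?thesis
      using r by (simp add: l_def)
  qed
  also have "l powr (1 - p) = t powr (1 - p) * r ^ m"
    unfolding l_def by (rule powr_cut_level[OF m p t r(1)])
  finally show ?thesis
    by (simp add: algebra_simps)
qed

lemma eq_0_of_small_ball_bounds:
  fixes D C V p :: real and m :: nat and F G I :: "real \<Rightarrow> real"
  assumes defect: "\<And>r. 0 < r \<Longrightarrow> r \<le> 1 \<Longrightarrow> \<bar>D\<bar> \<le> C * ((1/r) ^ m * F r + G r)"
    and split: "\<And>t r. 0 < t \<Longrightarrow> 0 < r \<Longrightarrow> r \<le> 1 \<Longrightarrow> F r \<le> r ^ m * (t * V + t powr (1 - p) * I r)"
    and "C \<ge> 0" and I: "(I \<longlongrightarrow> 0) (at_right 0)" and G: "(G \<longlongrightarrow> 0) (at_right 0)"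
  shows "D = 0"
proof -
  have "\<bar>D\<bar> \<le> C * (t * V)" if "0 < t" for t
  proof (rule tendsto_lowerbound)
    have "((\<lambda>r. C * (t * V + t powr (1 - p) * I r + G r)) \<longlongrightarrow> C * (t * V + t powr (1 - p) * 0 + 0)) (at_right 0)"
      by (intro tendsto_intros I G)
    then show "((\<lambda>r. C * (t * V + t powr (1 - p) * I r + G r)) \<longlongrightarrow> C * (t * V)) (at_right 0)"
      by simp
    have "\<bar>D\<bar> \<le> C * (t * V + t powr (1 - p) * I r + G r)" if r: "0 < r" "r \<le> 1" for r
    proof -
      have "(1/r) ^ m * F r \<le> (1/r) ^ m * (r ^ m * (t * V + t powr (1 - p) * I r))"
        using split[OF \<open>0 < t\<close> r] r by (intro mult_left_mono) simp_all
      also have "\<dots> = t * V + t powr (1 - p) * I r"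
        using r by (simp add: power_one_over field_simps)
      finally show ?thesis
        using defect[OF r] \<open>C \<ge> 0\<close> by (smt (verit) mult_left_mono)
    qed
    then show "\<forall>\<^sub>F r in at_right 0. \<bar>D\<bar> \<le> C * (t * V + t powr (1 - p) * I r + G r)"
      unfolding eventually_at_right_field by (intro exI[of _ 1]) auto
  qed simp
  then have "\<forall>\<^sub>F t in at_right 0. \<bar>D\<bar> \<le> C * (t * V)"
    unfolding eventually_at_right_field by (intro exI[of _ 1]) auto
  moreover have "((\<lambda>t. C * (t * V)) \<longlongrightarrow> C * (0 * V)) (at_right 0)"
    by (intro tendsto_intros)
  ultimately have "\<bar>D\<bar> \<le> C * (0 * V)"
    by (intro tendsto_lowerbound[of "\<lambda>t. C * (t * V)" _ "at_right 0"]) simp_all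
  then show ?thesis
    by simp
qed

theorem proposition2p1:
  fixes \<alpha> :: "'n::finite \<Rightarrow> nat" and m :: nat
    and f g :: "real^'n \<Rightarrow> real"
  assumes "mi_order \<alpha> = m" and "1 \<le> m" and "m < CARD('n)"
    and "in_Lp (real CARD('n) / (real CARD('n) - real m)) (ball 0 1) f"
    and "in_Lp 1 (ball 0 1) g"
    and "distrib_deriv_eq \<alpha> f g (ball 0 1 - {0})"
  shows "distrib_deriv_eq \<alpha> f g (ball 0 1)"
proof -
  define p where "p = real CARD('n) / (real CARD('n) - real m)"
  have "1 \<le> p"
    using assms(3) by (simp add: p_def le_divide_eq)
  have f: "integrable (lebesgue_on (ball 0 1)) f"
    using in_Lp_imp_integrable[OF assms(4)[folded p_def] \<open>1 \<le> p\<close>] by simp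
  have g: "integrable (lebesgue_on (ball 0 1)) g"
    using in_Lp_imp_integrable[OF assms(5)] by simp
  have fp: "integrable (lebesgue_on (ball 0 1)) (\<lambda>x. \<bar>f x\<bar> powr p)"
    using assms(4) by (simp add: in_Lp_def p_def)
  show ?thesis
    unfolding distrib_deriv_eq_iff_distrib_defect
  proof (intro allI impI)
    fix \<phi> :: "real^'n \<Rightarrow> real"
    assume "test_function (ball 0 1) \<phi>"
    then obtain C where "C \<ge> 0" and defect: "\<And>r. 0 < r \<Longrightarrow> r \<le> 1 \<Longrightarrow> \<bar>distrib_defect \<alpha> f g \<phi>\<bar>
        \<le> C * ((1/r) ^ mi_order \<alpha> * (LINT x|lebesgue_on (ball 0 1). \<bar>f x\<bar> * indicator (ball 0 r) x)
               + (LINT x|lebesgue_on (ball 0 1). \<bar>g x\<bar> * indicator (ball 0 r) x))"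
      using abs_distrib_defect_le_small_ball_integrals[OF assms(6) f g] by blast
    show "distrib_defect \<alpha> f g \<phi> = 0"
      using defect[unfolded assms(1)] small_ball_integral_le[OF f fp assms(3) p_def] \<open>C \<ge> 0\<close>
        integral_small_ball_tendsto_0[OF ball_in_sets_lebesgue fp]
        integral_small_ball_tendsto_0[OF ball_in_sets_lebesgue integrable_abs[OF g]]
      by (rule eq_0_of_small_ball_bounds)
  qed
qed
end
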